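(* Let $q$ be a prime, $0\le r\le n$, $X_r=\mathrm{diag}(qI_r,I_{n-r})$ and $X_{0,r}=\mathrm{diag}(I_{n-r},q^{-1}I_r)$. Suppose $(M\ N)$ and $(X_{0,r}MX_r^{-1}\ \ X_{0,r}NX_r)$ are both integral coprime symmetric pairs, with $\det N\ne0$. Then $$\mathcal G_{X_{0,r}MX_r^{-1}}(X_{0,r}NX_r)=\mathcal G_M(N).$$
   Context: A pair $(M\ N)$ of integral $n\times n$ matrices is a coprime symmetric pair if $M\,{}^tN$ is symmetric and $(M\ N)$ has rank $n$ modulo every prime. For such a pair with $\det N\ne0$, $\mathcal G_M(N)=\sum_{U\in\mathbb Z^{1,n}/\mathbb Z^{1,n}N}\exp\big(2\pi i\,\mathrm{Tr}({}^tUUN^{-1}M)\big)$. *)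

theory Defs
  imports "HOL-Analysis.Analysis" "HOL-Computational_Algebra.Primes"
    "Jordan_Normal_Form.Determinant"
begin

text \<open>Integral n x n matrices are JNF matrices of type int mat in carrier_mat n n;
  row vectors in Z^{1,n} are elements of carrier_vec n (acting on the left).\<close>

definition ratm :: "int mat \<Rightarrow> rat mat" where
  "ratm A = map_mat rat_of_int A"

definition mtrace :: "'a::comm_ring_1 mat \<Rightarrow> 'a" where
  "mtrace A = (\<Sum>i<dim_row A. A $$ (i,i))"

definition mat_inv :: "'a::field mat \<Rightarrow> 'a mat" where
  "mat_inv A = (THE B. B \<in> carrier_mat (dim_row A) (dim_row A) \<and> inverts_mat A B \<and> inverts_mat B A)"

text \<open>(M N) has rank n modulo p: its n rows are linearly independent over F_p, i.e.
  a row vector x with x(M N) = 0 mod p is itself 0 mod p.\<close>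
definition rank_full_mod :: "nat \<Rightarrow> int \<Rightarrow> int mat \<Rightarrow> int mat \<Rightarrow> bool" where
  "rank_full_mod n p M N \<longleftrightarrow>
     (\<forall>x \<in> carrier_vec n.
        (\<forall>j<n. p dvd (x \<bullet> col M j) \<and> p dvd (x \<bullet> col N j)) \<longrightarrow> (\<forall>i<n. p dvd x $ i))"

definition coprime_sym_pair :: "nat \<Rightarrow> int mat \<Rightarrow> int mat \<Rightarrow> bool" where
  "coprime_sym_pair n M N \<longleftrightarrow>
     M \<in> carrier_mat n n \<and> N \<in> carrier_mat n n \<and>
     transpose_mat (M * transpose_mat N) = M * transpose_mat N \<and>
     (\<forall>p::int. prime p \<longrightarrow> rank_full_mod n p M N)"

text \<open>U ~ V iff U - V \<in> Z^{1,n} N (row vectors), i.e. U - V = W N = N^t W.\<close>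
definition lat_rel :: "int mat \<Rightarrow> (int vec \<times> int vec) set" where
  "lat_rel N = {(u,v). u \<in> carrier_vec (dim_row N) \<and> v \<in> carrier_vec (dim_row N) \<and>
      (\<exists>w \<in> carrier_vec (dim_row N). u - v = transpose_mat N *\<^sub>v w)}"

definition gauss_term :: "int mat \<Rightarrow> int mat \<Rightarrow> int vec \<Rightarrow> complex" where
  "gauss_term M N U =
     exp (2 * pi * \<i> * complex_of_real (real_of_rat
        (mtrace (transpose_mat (mat_of_row (map_vec rat_of_int U)) * mat_of_row (map_vec rat_of_int U)
                 * mat_inv (ratm N) * ratm M))))"

definition gauss_sum :: "int mat \<Rightarrow> int mat \<Rightarrow> complex" where
  "gauss_sum M N = (\<Sum>C \<in> carrier_vec (dim_row N) // lat_rel N. gauss_term M N (SOME U. U \<in> C))"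

definition X_r :: "nat \<Rightarrow> nat \<Rightarrow> nat \<Rightarrow> rat mat" where
  "X_r n q r = mat_diag n (\<lambda>i. if i < r then of_nat q else 1)"

definition X_0r :: "nat \<Rightarrow> nat \<Rightarrow> nat \<Rightarrow> rat mat" where
  "X_0r n q r = mat_diag n (\<lambda>i. if i < n - r then 1 else 1 / of_nat q)"

end

theory Submission
  imports Defs
begin

text \<open>Right multiplication by \<open>X_r\<close> induces a bijection from
  \<open>\<int>\<^sup>1\<^sup>,\<^sup>n / \<int>\<^sup>1\<^sup>,\<^sup>n N\<close>
  onto \<open>\<int>\<^sup>1\<^sup>,\<^sup>n / \<int>\<^sup>1\<^sup>,\<^sup>n N'\<close>.
  It is well defined because \<open>X_{0,r}\<^sup>-\<^sup>1\<close> is integral; it is injective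
  because \<open>(M N)\<close> has full rank modulo \<open>q\<close> while the last \<open>r\<close> rows
  of \<open>M\<close> vanish modulo \<open>q\<close>; and it is surjective because the same rank
  condition makes the lower left \<open>r \<times> r\<close> block of \<open>N\<close> invertible modulo
  \<open>q\<close>. Since \<open>N'\<^sup>-\<^sup>1 M' = X_r\<^sup>-\<^sup>1 N\<^sup>-\<^sup>1 M X_r\<^sup>-\<^sup>1\<close>, the bijection
  preserves \<open>U N\<^sup>-\<^sup>1 M \<^sup>tU\<close>, so both Gauss sums have the same terms.\<close>

lemma mat_inv_eqI:
  fixes A B :: "'a::field mat"
  assumes A: "A \<in> carrier_mat n n" and B: "B \<in> carrier_mat n n"
    and AB: "A * B = 1\<^sub>m n" and BA: "B * A = 1\<^sub>m n"
  shows "mat_inv A = B"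
  unfolding mat_inv_def
proof (rule the_equality)
  show "B \<in> carrier_mat (dim_row A) (dim_row A) \<and> inverts_mat A B \<and> inverts_mat B A"
    using assms unfolding inverts_mat_def by auto
next
  fix C assume "C \<in> carrier_mat (dim_row A) (dim_row A) \<and> inverts_mat A C \<and> inverts_mat C A"
  then have C: "C \<in> carrier_mat n n" and CA: "C * A = 1\<^sub>m n"
    using A unfolding inverts_mat_def by auto
  have "C = (C * A) * B" using C A B AB by simp
  then show "C = B" using CA B by simp
qed

lemma mat_diag_mult_vec:
  assumes "v \<in> carrier_vec n"
  shows "mat_diag n f *\<^sub>v v = vec n (\<lambda>i. f i * v $ i)"
proof (intro eq_vecI)
  fix i assume "i < dim_vec (vec n (\<lambda>i. f i * v $ i))"
  then have i: "i < n" by simp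
  have "(mat_diag n f *\<^sub>v v) $ i = (\<Sum>j = 0..<n. (if i = j then f j else 0) * v $ j)"
    using i assms by (simp add: mat_diag_def mult_mat_vec_def scalar_prod_def)
  also have "\<dots> = (\<Sum>j = 0..<n. if i = j then f j * v $ j else 0)"
    by (rule sum.cong) auto
  finally show "(mat_diag n f *\<^sub>v v) $ i = vec n (\<lambda>i. f i * v $ i) $ i"
    using i by simp
qed (simp add: mat_diag_def)

lemma mat_diag_mult_vec_carrier [simp]: "v \<in> carrier_vec n \<Longrightarrow> mat_diag n f *\<^sub>v v \<in> carrier_vec n"
  by (simp add: mat_diag_mult_vec)

lemma mat_diag_inverse_mult_vec:
  fixes f :: "nat \<Rightarrow> 'a::field"
  assumes "\<And>i. i < n \<Longrightarrow> f i \<noteq> 0" and "v \<in> carrier_vec n"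
  shows "mat_diag n (\<lambda>i. inverse (f i)) *\<^sub>v (mat_diag n f *\<^sub>v v) = v"
    and "mat_diag n f *\<^sub>v (mat_diag n (\<lambda>i. inverse (f i)) *\<^sub>v v) = v"
  using assms by (auto simp: mat_diag_mult_vec intro!: eq_vecI)

lemma mat_inv_mat_diag:
  fixes f :: "nat \<Rightarrow> 'a::field"
  assumes "\<And>i. i < n \<Longrightarrow> f i \<noteq> 0"
  shows "mat_inv (mat_diag n f) = mat_diag n (\<lambda>i. inverse (f i))"
proof (rule mat_inv_eqI[of _ n])
  have "mat_diag n (\<lambda>i. f i * inverse (f i)) = 1\<^sub>m n"
    "mat_diag n (\<lambda>i. inverse (f i) * f i) = 1\<^sub>m n"
    using assms by (auto simp: mat_diag_def intro!: eq_matI)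
  then show "mat_diag n f * mat_diag n (\<lambda>i. inverse (f i)) = 1\<^sub>m n"
    "mat_diag n (\<lambda>i. inverse (f i)) * mat_diag n f = 1\<^sub>m n"
    by simp_all
qed auto

lemma scalar_prod_mat_diag_inverse:
  fixes f :: "nat \<Rightarrow> 'a::field"
  assumes "\<And>i. i < n \<Longrightarrow> f i \<noteq> 0" and "a \<in> carrier_vec n" and "b \<in> carrier_vec n"
  shows "(mat_diag n f *\<^sub>v a) \<bullet> (mat_diag n (\<lambda>i. inverse (f i)) *\<^sub>v b) = a \<bullet> b"
  using assms by (auto simp: mat_diag_mult_vec scalar_prod_def intro!: sum.cong)

lemma det_mat_diag_nonzero:
  fixes f :: "nat \<Rightarrow> 'a::idom"
  assumes "\<And>i. i < n \<Longrightarrow> f i \<noteq> 0"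
  shows "det (mat_diag n f) \<noteq> 0"
proof -
  have "det (mat_diag n f) = prod_list (diag_mat (mat_diag n f))"
    by (rule det_upper_triangular) (auto simp: upper_triangular_def mat_diag_def)
  also have "\<dots> = (\<Prod>i = 0..<n. f i)" by (simp add: prod_list_diag_prod mat_diag_def)
  finally show ?thesis using assms by simp
qed

lemma index_mat_diag_mult_mat_diag:
  assumes "A \<in> carrier_mat n n" and "i < n" and "j < n"
  shows "(mat_diag n f * A * mat_diag n g) $$ (i,j) = f i * A $$ (i,j) * g j"
  using assms by (simp add: mat_diag_mult_left[of _ n n] mat_diag_mult_right[of _ n n])

lemma mult_mat_vec_assoc3:
  assumes "A \<in> carrier_mat n n" "B \<in> carrier_mat n n" "C \<in> carrier_mat n n" "v \<in> carrier_vec n"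
  shows "(A * B * C) *\<^sub>v v = A *\<^sub>v (B *\<^sub>v (C *\<^sub>v v))"
  using assms by (simp add: assoc_mult_mat_vec[of _ n n _ n])

abbreviation ratv :: "int vec \<Rightarrow> rat vec" where
  "ratv \<equiv> map_vec rat_of_int"

lemma ratm_carrier [simp]: "A \<in> carrier_mat nr nc \<Longrightarrow> ratm A \<in> carrier_mat nr nc"
  unfolding ratm_def by simp

lemma index_ratm [simp]: "i < dim_row A \<Longrightarrow> j < dim_col A \<Longrightarrow> ratm A $$ (i,j) = of_int (A $$ (i,j))"
  unfolding ratm_def by simp

lemma det_ratm: "det (ratm A) = of_int (det A)"
  unfolding ratm_def by (rule of_int_hom.hom_det)

lemma ratm_transpose: "ratm (transpose_mat A) = transpose_mat (ratm A)"
  unfolding ratm_def by (intro eq_matI) auto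

lemma ratv_mult_mat_vec:
  "A \<in> carrier_mat nr nc \<Longrightarrow> x \<in> carrier_vec nc \<Longrightarrow> ratv (A *\<^sub>v x) = ratm A *\<^sub>v ratv x"
  unfolding ratm_def by (rule of_int_hom.mult_mat_vec_hom)

lemma ratv_add: "x \<in> carrier_vec n \<Longrightarrow> y \<in> carrier_vec n \<Longrightarrow> ratv (x + y) = ratv x + ratv y"
  by (intro eq_vecI) auto

lemma ratv_scalar_prod: "x \<in> carrier_vec n \<Longrightarrow> y \<in> carrier_vec n \<Longrightarrow> ratv x \<bullet> ratv y = of_int (x \<bullet> y)"
  by (simp add: scalar_prod_def of_int_sum)

lemma mat_inv_ratm:
  assumes N: "N \<in> carrier_mat n n" and det: "det N \<noteq> 0"
  shows "mat_inv (ratm N) \<in> carrier_mat n n" "ratm N * mat_inv (ratm N) = 1\<^sub>m n"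
    "mat_inv (ratm N) * ratm N = 1\<^sub>m n"
proof -
  have "det (ratm N) \<noteq> 0" using det by (simp add: det_ratm)
  from det_non_zero_imp_unit[OF ratm_carrier[OF N] this, of "()"]
  obtain B where B: "B \<in> carrier_mat n n" "ratm N * B = 1\<^sub>m n" "B * ratm N = 1\<^sub>m n"
    unfolding Units_def ring_mat_def by auto
  moreover have "mat_inv (ratm N) = B" using N B by (intro mat_inv_eqI[of _ n]) auto
  ultimately show "mat_inv (ratm N) \<in> carrier_mat n n" "ratm N * mat_inv (ratm N) = 1\<^sub>m n"
    "mat_inv (ratm N) * ratm N = 1\<^sub>m n" by auto
qed

lemma ratm_solvable:
  assumes N: "N \<in> carrier_mat n n" and det: "det N \<noteq> 0" and v: "v \<in> carrier_vec n"
  obtains z where "z \<in> carrier_vec n" and "ratm N *\<^sub>v z = v"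
proof
  note Ni = mat_inv_ratm[OF N det]
  show "mat_inv (ratm N) *\<^sub>v v \<in> carrier_vec n" using Ni(1) v by simp
  have "ratm N *\<^sub>v (mat_inv (ratm N) *\<^sub>v v) = (ratm N * mat_inv (ratm N)) *\<^sub>v v"
    by (rule assoc_mult_mat_vec[of _ n n _ n, symmetric]) (use Ni N v in auto)
  then show "ratm N *\<^sub>v (mat_inv (ratm N) *\<^sub>v v) = v" using Ni(2) v by simp
qed

section \<open>Gauss sums\<close>

definition e_rat :: "rat \<Rightarrow> complex" where
  "e_rat x = exp (2 * pi * \<i> * complex_of_real (real_of_rat x))"

lemma e_rat_add_of_int [simp]: "e_rat (x + of_int k) = e_rat x"
proof -
  have "exp (complex_of_real (2 * real_of_int k * pi) * \<i>) = 1"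
    by (rule exp_integer_2pi) simp
  moreover have "2 * pi * \<i> * complex_of_real (real_of_rat (x + of_int k))
      = 2 * pi * \<i> * complex_of_real (real_of_rat x) + complex_of_real (2 * real_of_int k * pi) * \<i>"
    by (simp add: of_rat_add algebra_simps)
  ultimately show ?thesis unfolding e_rat_def by (simp add: exp_add)
qed

lemma mtrace_outer_product_mult:
  fixes U :: "'a::comm_ring_1 vec"
  assumes U: "U \<in> carrier_vec n" and A: "A \<in> carrier_mat n n"
  shows "mtrace (transpose_mat (mat_of_row U) * mat_of_row U * A) = U \<bullet> (A *\<^sub>v U)"
proof -
  have "mtrace (transpose_mat (mat_of_row U) * mat_of_row U * A)
      = (\<Sum>i<n. \<Sum>k<n. U $ i * U $ k * A $$ (k,i))"
    unfolding mtrace_def using U A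
    by (auto simp: mat_of_row_def scalar_prod_def lessThan_atLeast0 intro!: sum.cong)
  also have "\<dots> = (\<Sum>k<n. \<Sum>i<n. U $ k * (A $$ (k,i) * U $ i))"
    by (subst sum.swap) (auto simp: mult_ac intro!: sum.cong)
  also have "\<dots> = U \<bullet> (A *\<^sub>v U)"
    using U A by (auto simp: scalar_prod_def mult_mat_vec_def sum_distrib_left lessThan_atLeast0
        intro!: sum.cong)
  finally show ?thesis .
qed

lemma gauss_term_eq_e_rat:
  assumes M: "M \<in> carrier_mat n n" and N: "N \<in> carrier_mat n n" and det: "det N \<noteq> 0"
    and U: "U \<in> carrier_vec n" and z: "z \<in> carrier_vec n"
    and Nz: "ratm N *\<^sub>v z = ratm M *\<^sub>v ratv U"
  shows "gauss_term M N U = e_rat (ratv U \<bullet> z)"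
proof -
  let ?R = "mat_of_row (ratv U)" and ?Ni = "mat_inv (ratm N)"
  note Ni = mat_inv_ratm[OF N det]
  have R: "?R \<in> carrier_mat 1 n" using U by simp
  have "(?Ni * ratm M) *\<^sub>v ratv U = ?Ni *\<^sub>v (ratm N *\<^sub>v z)"
    using Ni(1) M U by (simp add: assoc_mult_mat_vec[of _ n n _ n] Nz)
  also have "\<dots> = z" using Ni N z by (simp add: assoc_mult_mat_vec[of _ n n _ n, symmetric])
  finally have z_eq: "(?Ni * ratm M) *\<^sub>v ratv U = z" .
  have "transpose_mat ?R * ?R * ?Ni * ratm M = transpose_mat ?R * ?R * (?Ni * ratm M)"
    using R Ni(1) M by (intro assoc_mult_mat[of _ n n _ n _ n]) auto
  then have "mtrace (transpose_mat ?R * ?R * ?Ni * ratm M) = ratv U \<bullet> z"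
    using mtrace_outer_product_mult[of "ratv U" n "?Ni * ratm M"] Ni(1) M U z_eq by simp
  then show ?thesis unfolding gauss_term_def e_rat_def by simp
qed

lemma lat_rel_iff:
  assumes N: "N \<in> carrier_mat n n"
  shows "(u,v) \<in> lat_rel N \<longleftrightarrow> u \<in> carrier_vec n \<and> v \<in> carrier_vec n \<and>
     (\<exists>w \<in> carrier_vec n. \<forall>j<n. u $ j - v $ j = (\<Sum>i<n. N $$ (i,j) * w $ i))"
proof -
  have "u - v = transpose_mat N *\<^sub>v w \<longleftrightarrow> (\<forall>j<n. u $ j - v $ j = (\<Sum>i<n. N $$ (i,j) * w $ i))"
    if "u \<in> carrier_vec n" "v \<in> carrier_vec n" "w \<in> carrier_vec n" for u v w :: "int vec"
    using that N by (auto simp: vec_eq_iff mult_mat_vec_def scalar_prod_def lessThan_atLeast0)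
  then show ?thesis unfolding lat_rel_def using N by auto
qed

lemma lat_rel_equiv:
  assumes N: "N \<in> carrier_mat n n"
  shows "equiv (carrier_vec n) (lat_rel N)"
proof (rule equivI)
  show "lat_rel N \<subseteq> carrier_vec n \<times> carrier_vec n" using lat_rel_iff[OF N] by auto
  show "refl_on (carrier_vec n) (lat_rel N)"
    by (rule refl_onI) (auto simp: lat_rel_iff[OF N] intro!: bexI[of _ "0\<^sub>v n"])
  show "sym (lat_rel N)"
  proof (rule symI)
    fix u v assume "(u,v) \<in> lat_rel N"
    then obtain w where uvw: "u \<in> carrier_vec n" "v \<in> carrier_vec n" "w \<in> carrier_vec n"
      and e: "\<forall>j<n. u $ j - v $ j = (\<Sum>i<n. N $$ (i,j) * w $ i)"
      unfolding lat_rel_iff[OF N] by blast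
    show "(v,u) \<in> lat_rel N" unfolding lat_rel_iff[OF N]
    proof (intro conjI bexI[of _ "- w"] allI impI)
      fix j assume "j < n"
      then have "v $ j - u $ j = - (\<Sum>i<n. N $$ (i,j) * w $ i)" using e by fastforce
      then show "v $ j - u $ j = (\<Sum>i<n. N $$ (i,j) * (- w) $ i)"
        using uvw by (auto simp: sum_negf[symmetric] intro!: sum.cong)
    qed (use uvw in auto)
  qed
  show "trans (lat_rel N)"
  proof (rule transI)
    fix u v t assume "(u,v) \<in> lat_rel N" "(v,t) \<in> lat_rel N"
    then obtain w1 w2 where uvw: "u \<in> carrier_vec n" "t \<in> carrier_vec n"
      "w1 \<in> carrier_vec n" "w2 \<in> carrier_vec n"
      and e1: "\<forall>j<n. u $ j - v $ j = (\<Sum>i<n. N $$ (i,j) * w1 $ i)"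
      and e2: "\<forall>j<n. v $ j - t $ j = (\<Sum>i<n. N $$ (i,j) * w2 $ i)"
      unfolding lat_rel_iff[OF N] by blast
    show "(u,t) \<in> lat_rel N" unfolding lat_rel_iff[OF N]
    proof (intro conjI bexI[of _ "w1 + w2"] allI impI)
      fix j assume "j < n"
      then have "u $ j - t $ j = (\<Sum>i<n. N $$ (i,j) * w1 $ i) + (\<Sum>i<n. N $$ (i,j) * w2 $ i)"
        using e1 e2 by fastforce
      then show "u $ j - t $ j = (\<Sum>i<n. N $$ (i,j) * (w1 + w2) $ i)"
        using uvw by (auto simp: distrib_left sum.distrib[symmetric] intro!: sum.cong)
    qed (use uvw in auto)
  qed
qed

text \<open>If \<open>N z = M \<^sup>tv\<close> and \<open>u = v + w N\<close>, then \<open>z + \<^sup>tM \<^sup>tw\<close> solves the system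
  for \<open>u\<close> because \<open>M \<^sup>tN\<close> is symmetric, and the quadratic form changes by an integer.\<close>

lemma gauss_term_lat_rel:
  assumes M: "M \<in> carrier_mat n n" and N: "N \<in> carrier_mat n n" and det: "det N \<noteq> 0"
    and sym: "transpose_mat (M * transpose_mat N) = M * transpose_mat N"
    and uv: "(u, v) \<in> lat_rel N"
  shows "gauss_term M N u = gauss_term M N v"
proof -
  obtain w where u: "u \<in> carrier_vec n" and v: "v \<in> carrier_vec n" and w: "w \<in> carrier_vec n"
    and uvw: "u - v = transpose_mat N *\<^sub>v w"
    using uv N unfolding lat_rel_def by auto
  obtain z where z: "z \<in> carrier_vec n" and Nz: "ratm N *\<^sub>v z = ratm M *\<^sub>v ratv v"
    using ratm_solvable[OF N det] ratm_carrier[OF M] v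
    by (metis map_carrier_vec mult_mat_vec_carrier)
  define b where "b = transpose_mat N *\<^sub>v w"
  define c where "c = transpose_mat M *\<^sub>v w"
  have b: "b \<in> carrier_vec n" and c: "c \<in> carrier_vec n"
    using M N w by (auto simp: b_def c_def)
  have "u = v + (u - v)" using u v by (intro eq_vecI) simp_all
  then have u_eq: "u = v + b" unfolding b_def uvw .
  have "N *\<^sub>v c = (N * transpose_mat M) *\<^sub>v w"
    unfolding c_def by (rule assoc_mult_mat_vec[symmetric]) (use M N w in auto)
  also have "N * transpose_mat M = M * transpose_mat N"
    using sym M N by (simp add: transpose_mult)
  also have "(M * transpose_mat N) *\<^sub>v w = M *\<^sub>v b"
    unfolding b_def by (rule assoc_mult_mat_vec) (use M N w in auto)
  finally have "ratm N *\<^sub>v ratv c = ratm M *\<^sub>v ratv b"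
    using M N b c by (simp add: ratv_mult_mat_vec[symmetric])
  then have "ratm N *\<^sub>v (z + ratv c) = ratm M *\<^sub>v (ratv v + ratv b)"
    using Nz z c v b M N
    by (simp add: mult_add_distrib_mat_vec[of _ n n])
  then have "gauss_term M N u = e_rat (ratv u \<bullet> (z + ratv c))"
    using gauss_term_eq_e_rat[OF M N det u] z c v b by (simp add: u_eq ratv_add[of _ n])
  also have "ratv u \<bullet> (z + ratv c) = ratv v \<bullet> z + ratv v \<bullet> ratv c + (ratv b \<bullet> z + ratv b \<bullet> ratv c)"
    using z c v b
    by (simp add: u_eq ratv_add[of _ n] add_scalar_prod_distrib[of _ n]
        scalar_prod_add_distrib[of _ n])
  also have "ratv b \<bullet> z = ratv w \<bullet> ratv (M *\<^sub>v v)"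
    using N M v w z
    by (simp add: b_def ratv_mult_mat_vec ratm_transpose transpose_vec_mult_scalar[of _ n n] Nz)
  also have "ratv v \<bullet> z + ratv v \<bullet> ratv c + (ratv w \<bullet> ratv (M *\<^sub>v v) + ratv b \<bullet> ratv c)
      = ratv v \<bullet> z + of_int (v \<bullet> c + w \<bullet> (M *\<^sub>v v) + b \<bullet> c)"
    using v w c b M by (simp add: ratv_scalar_prod[of _ n])
  finally show ?thesis
    unfolding gauss_term_eq_e_rat[OF M N det v z Nz] e_rat_add_of_int .
qed

section \<open>Sums over quotients and congruences\<close>

lemma sum_quotient_reindex:
  assumes eA: "equiv A R" and eB: "equiv B S"
    and g: "\<And>a. a \<in> A \<Longrightarrow> g a \<in> B"
    and g_rel: "\<And>a a'. a \<in> A \<Longrightarrow> a' \<in> A \<Longrightarrow> (g a, g a') \<in> S \<longleftrightarrow> (a, a') \<in> R"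
    and g_surj: "\<And>b. b \<in> B \<Longrightarrow> \<exists>a\<in>A. (g a, b) \<in> S"
    and f: "\<And>a a'. (a, a') \<in> R \<Longrightarrow> f a = f a'"
    and h: "\<And>b b'. (b, b') \<in> S \<Longrightarrow> h b = h b'"
    and hg: "\<And>a. a \<in> A \<Longrightarrow> h (g a) = f a"
  shows "(\<Sum>D\<in>B//S. h (SOME b. b \<in> D)) = (\<Sum>C\<in>A//R. f (SOME a. a \<in> C))"
proof -
  have rep: "(SOME x. x \<in> X) \<in> X" if "equiv Y T" "X \<in> Y//T" for X Y T
    using in_quotient_imp_non_empty[OF that] by (simp add: some_in_eq)
  have rep_A: "(SOME a. a \<in> C) \<in> A" if "C \<in> A//R" for C
    using rep[OF eA that] in_quotient_imp_subset[OF eA that] by blast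
  define \<Phi> where "\<Phi> C = S `` {g (SOME a. a \<in> C)}" for C
  have \<Phi>_rep: "(g (SOME a. a \<in> C), SOME b. b \<in> \<Phi> C) \<in> S" if "C \<in> A//R" for C
    using rep[OF eB quotientI[OF g[OF rep_A[OF that]]]] by (simp add: \<Phi>_def)
  have "bij_betw \<Phi> (A//R) (B//S)"
  proof (rule bij_betw_imageI)
    show "inj_on \<Phi> (A//R)"
    proof (rule inj_onI)
      fix C C' assume C: "C \<in> A//R" and C': "C' \<in> A//R" and eq: "\<Phi> C = \<Phi> C'"
      then have "(g (SOME a. a \<in> C), g (SOME a. a \<in> C')) \<in> S"
        using eq_equiv_class_iff[OF eB] g rep_A unfolding \<Phi>_def by blast
      then have "(SOME a. a \<in> C, SOME a. a \<in> C') \<in> R" using g_rel rep_A C C' by blast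
      then show "C = C'" using quotient_eqI[OF eA C C' rep[OF eA C] rep[OF eA C']] by blast
    qed
    show "\<Phi> ` (A//R) = B//S"
    proof
      show "\<Phi> ` (A//R) \<subseteq> B//S" unfolding \<Phi>_def using g rep_A by (auto intro: quotientI)
      show "B//S \<subseteq> \<Phi> ` (A//R)"
      proof
        fix D assume "D \<in> B//S"
        then obtain b where D: "D = S `` {b}" and b: "b \<in> B" by (rule quotientE)
        obtain a where a: "a \<in> A" and ab: "(g a, b) \<in> S" using g_surj[OF b] by blast
        define c where "c = (SOME x. x \<in> R `` {a})"
        have "c \<in> R `` {a}" unfolding c_def using rep[OF eA quotientI[OF a]] .
        then have "(g a, g c) \<in> S" using g_rel a eA by (auto dest: equiv_class_eq_iff[THEN iffD1])
        then have "(g c, b) \<in> S" using ab eB by (meson equivE symE transE)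
        then have "\<Phi> (R `` {a}) = D"
          unfolding \<Phi>_def D c_def[symmetric] by (rule equiv_class_eq[OF eB])
        then show "D \<in> \<Phi> ` (A//R)" using quotientI[OF a] by blast
      qed
    qed
  qed
  then have "(\<Sum>D\<in>B//S. h (SOME b. b \<in> D)) = (\<Sum>C\<in>A//R. h (SOME b. b \<in> \<Phi> C))"
    by (rule sum.reindex_bij_betw[symmetric])
  also have "\<dots> = (\<Sum>C\<in>A//R. f (SOME a. a \<in> C))"
    using h[OF \<Phi>_rep] hg rep_A by (intro sum.cong) auto
  finally show ?thesis .
qed

text \<open>The map of residue vectors \<open>d \<mapsto> d A mod q\<close> is injective on a finite set, hence
  surjective.\<close>

lemma congruence_system_solvable:
  fixes A :: "nat \<Rightarrow> nat \<Rightarrow> int" and q :: int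
  assumes q: "0 < q"
    and inj: "\<And>d k. \<forall>j<r. q dvd (\<Sum>i<r. A i j * d i) \<Longrightarrow> k < r \<Longrightarrow> q dvd d k"
  shows "\<exists>d. \<forall>j<r. (\<Sum>i<r. A i j * d i) mod q = c j mod q"
proof -
  let ?R = "PiE {..<r} (\<lambda>_. {0..<q})"
  define \<Phi> where "\<Phi> d = restrict (\<lambda>j. (\<Sum>i<r. A i j * d i) mod q) {..<r}" for d
  have "\<Phi> d \<in> ?R" for d
    unfolding \<Phi>_def restrict_PiE_iff using q by simp
  then have \<Phi>_R: "\<Phi> ` ?R \<subseteq> ?R" by blast
  have "inj_on \<Phi> ?R"
  proof (rule inj_onI)
    fix d d' assume d: "d \<in> ?R" and d': "d' \<in> ?R" and eq: "\<Phi> d = \<Phi> d'"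
    have "q dvd (\<Sum>i<r. A i j * (d i - d' i))" if "j < r" for j
    proof -
      have "(\<Sum>i<r. A i j * d i) mod q = (\<Sum>i<r. A i j * d' i) mod q"
        using fun_cong[OF eq, of j] that by (simp add: \<Phi>_def)
      then show ?thesis by (simp add: mod_eq_dvd_iff right_diff_distrib sum_subtractf)
    qed
    then have dvd: "q dvd d k - d' k" if "k < r" for k using inj[of "\<lambda>i. d i - d' i"] that by blast
    show "d = d'"
    proof (rule PiE_ext[OF d d'])
      fix k assume "k \<in> {..<r}"
      then have "d k \<in> {0..<q}" "d' k \<in> {0..<q}" using PiE_mem d d' by fast+
      then have small: "\<bar>d k - d' k\<bar> < \<bar>q\<bar>" by simp arith
      show "d k = d' k"
        using dvd_imp_le_int[OF _ dvd] small \<open>k \<in> {..<r}\<close> by fastforce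
    qed
  qed
  then have "\<Phi> ` ?R = ?R" by (intro endo_inj_surj \<Phi>_R) (simp add: finite_PiE)
  moreover have "restrict (\<lambda>j. c j mod q) {..<r} \<in> ?R" using q by simp
  ultimately obtain d where d: "\<Phi> d = restrict (\<lambda>j. c j mod q) {..<r}"
    by (metis imageE)
  show ?thesis
  proof (intro exI allI impI)
    fix j assume "j < r"
    then show "(\<Sum>i<r. A i j * d i) mod q = c j mod q"
      using fun_cong[OF d, of j] by (simp add: \<Phi>_def)
  qed
qed

definition lower_block_vec :: "nat \<Rightarrow> nat \<Rightarrow> (nat \<Rightarrow> 'a::zero) \<Rightarrow> 'a vec" where
  "lower_block_vec n r d = vec n (\<lambda>i. if n - r \<le> i then d (i - (n - r)) else 0)"

lemma lower_block_vec_index: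
  assumes "r \<le> n" and "k < r"
  shows "lower_block_vec n r d $ (n - r + k) = d k"
proof -
  have "n - r + k < n" using assms by linarith
  then show ?thesis by (simp add: lower_block_vec_def)
qed

lemma sum_lower_block_vec:
  fixes f :: "nat \<Rightarrow> 'a::semiring_0"
  assumes "r \<le> n"
  shows "(\<Sum>i<n. f i * lower_block_vec n r d $ i) = (\<Sum>k<r. f (n - r + k) * d k)"
proof -
  have "(\<Sum>i<n. f i * lower_block_vec n r d $ i) = (\<Sum>i\<in>{n-r..<n}. f i * d (i - (n - r)))"
    by (rule sum.mono_neutral_cong_right) (auto simp: lower_block_vec_def)
  also have "\<dots> = (\<Sum>k<r. f (n - r + k) * d k)"
    using assms by (intro sum.reindex_bij_witness[of _ "\<lambda>k. n - r + k" "\<lambda>i. i - (n - r)"]) auto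
  finally show ?thesis .
qed

section \<open>Rescaling a coprime symmetric pair\<close>

locale q_scaling =
  fixes n r q :: nat and M N M' N' :: "int mat"
  assumes prime: "prime q" and r_le_n: "r \<le> n"
    and coprime: "coprime_sym_pair n M N" and det_N: "det N \<noteq> 0"
    and M'_eq: "ratm M' = X_0r n q r * ratm M * mat_inv (X_r n q r)"
    and N'_eq: "ratm N' = X_0r n q r * ratm N * X_r n q r"
    and coprime': "coprime_sym_pair n M' N'"
begin

text \<open>\<open>col_factor\<close> and \<open>row_factor\<close> are the diagonals of \<open>X_r\<close> and of
  \<open>X_{0,r}\<^sup>-\<^sup>1\<close>, and \<open>scale u\<close> below is the row vector \<open>u X_r\<close>.\<close>

definition col_factor :: "nat \<Rightarrow> int" where
  "col_factor j = (if j < r then int q else 1)"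

definition row_factor :: "nat \<Rightarrow> int" where
  "row_factor i = (if i < n - r then 1 else int q)"

lemma q_pos: "int q > 0"
  using prime prime_gt_0_nat by simp

lemma col_factor_nonzero: "col_factor j \<noteq> 0" and row_factor_nonzero: "row_factor i \<noteq> 0"
  using q_pos by (auto simp: col_factor_def row_factor_def)

lemma carriers:
  "M \<in> carrier_mat n n" "N \<in> carrier_mat n n" "M' \<in> carrier_mat n n" "N' \<in> carrier_mat n n"
  using coprime coprime' by (auto simp: coprime_sym_pair_def)

lemma X_r_eq: "X_r n q r = mat_diag n (\<lambda>j. of_int (col_factor j))"
  by (simp add: X_r_def col_factor_def if_distrib cong: if_cong)

lemma X_0r_eq: "X_0r n q r = mat_diag n (\<lambda>i. inverse (of_int (row_factor i)))"
  by (simp add: X_0r_def row_factor_def if_distrib divide_inverse cong: if_cong)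

lemma mat_inv_X_r: "mat_inv (X_r n q r) = mat_diag n (\<lambda>j. inverse (of_int (col_factor j)))"
  unfolding X_r_eq by (rule mat_inv_mat_diag) (simp add: col_factor_nonzero)

lemma N'_entry:
  assumes "i < n" and "j < n"
  shows "N' $$ (i,j) * row_factor i = N $$ (i,j) * col_factor j"
proof -
  have "rat_of_int (N' $$ (i,j))
      = inverse (of_int (row_factor i)) * of_int (N $$ (i,j)) * of_int (col_factor j)"
    using arg_cong[OF N'_eq, of "\<lambda>A. A $$ (i,j)"] assms carriers
    by (simp add: X_r_eq X_0r_eq index_mat_diag_mult_mat_diag[of _ n])
  then have "rat_of_int (N' $$ (i,j) * row_factor i) = of_int (N $$ (i,j) * col_factor j)"
    using row_factor_nonzero[of i] by (simp add: field_simps)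
  then show ?thesis by (simp only: of_int_eq_iff)
qed

lemma M_entry:
  assumes "i < n" and "j < n"
  shows "M $$ (i,j) = M' $$ (i,j) * row_factor i * col_factor j"
proof -
  have "rat_of_int (M' $$ (i,j))
      = inverse (of_int (row_factor i)) * of_int (M $$ (i,j)) * inverse (of_int (col_factor j))"
    using arg_cong[OF M'_eq, of "\<lambda>A. A $$ (i,j)"] assms carriers
    by (simp add: X_0r_eq mat_inv_X_r index_mat_diag_mult_mat_diag[of _ n])
  then have "rat_of_int (M $$ (i,j)) = of_int (M' $$ (i,j) * row_factor i * col_factor j)"
    using row_factor_nonzero[of i] col_factor_nonzero[of j] by (simp add: field_simps)
  then show ?thesis by (simp only: of_int_eq_iff)
qed

lemma q_dvd_N_lower_right:
  assumes "n - r \<le> i" "i < n" "r \<le> j" "j < n"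
  shows "int q dvd N $$ (i,j)"
proof -
  have "N $$ (i,j) = N' $$ (i,j) * int q"
    using N'_entry[of i j] assms by (simp add: row_factor_def col_factor_def)
  then show ?thesis by simp
qed

lemma q_dvd_M_lower:
  assumes "n - r \<le> i" "i < n" "j < n"
  shows "int q dvd M $$ (i,j)"
proof -
  have "M $$ (i,j) = M' $$ (i,j) * col_factor j * int q"
    using M_entry[of i j] assms by (simp add: row_factor_def)
  then show ?thesis by simp
qed

lemma N'_lower_left:
  assumes "n - r \<le> i" "i < n" "j < r"
  shows "N' $$ (i,j) = N $$ (i,j)"
  using N'_entry[of i j] assms q_pos r_le_n by (simp add: row_factor_def col_factor_def)

lemma q_dvd_entries:
  fixes x :: "int vec"
  assumes x: "x \<in> carrier_vec n" and upper: "\<And>i. i < n - r \<Longrightarrow> int q dvd x $ i"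
    and N_x: "\<And>j. j < n \<Longrightarrow> int q dvd (\<Sum>i<n. N $$ (i,j) * x $ i)"
    and "i < n"
  shows "int q dvd x $ i"
proof -
  have sum_col: "x \<bullet> col A j = (\<Sum>i<n. A $$ (i,j) * x $ i)" if "A \<in> carrier_mat n n" "j < n" for A j
    using x that by (auto simp: scalar_prod_def lessThan_atLeast0 mult.commute intro!: sum.cong)
  have "int q dvd x \<bullet> col M j" if "j < n" for j
    unfolding sum_col[OF carriers(1) that]
    using upper q_dvd_M_lower that by (intro dvd_sum) (metis dvd_mult dvd_mult2 lessThan_iff not_le)
  moreover have "rank_full_mod n (int q) M N"
    using coprime prime by (simp add: coprime_sym_pair_def)
  ultimately show ?thesis
    using N_x x \<open>i < n\<close> sum_col[OF carriers(2)] unfolding rank_full_mod_def by simp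
qed

lemma lower_block_injective_mod:
  fixes d :: "nat \<Rightarrow> int"
  assumes "\<forall>j<r. int q dvd (\<Sum>k<r. N $$ (n - r + k, j) * d k)" and "k < r"
  shows "int q dvd d k"
proof -
  let ?y = "lower_block_vec n r d"
  have N_y: "int q dvd (\<Sum>i<n. N $$ (i,j) * ?y $ i)" if "j < n" for j
  proof (cases "j < r")
    case True
    then show ?thesis using assms(1) by (simp add: sum_lower_block_vec[OF r_le_n])
  next
    case False
    have "int q dvd N $$ (n - r + k, j) * d k" if "k < r" for k
      using False \<open>j < n\<close> that r_le_n by (simp add: q_dvd_N_lower_right)
    then show ?thesis unfolding sum_lower_block_vec[OF r_le_n] by (intro dvd_sum) simp
  qed
  have "int q dvd ?y $ (n - r + k)"
  proof (rule q_dvd_entries)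
    show "?y \<in> carrier_vec n" by (simp add: lower_block_vec_def)
    show "int q dvd ?y $ i" if "i < n - r" for i using that by (simp add: lower_block_vec_def)
    show "n - r + k < n" using assms(2) r_le_n by linarith
  qed (rule N_y)
  then show ?thesis by (simp add: lower_block_vec_index[OF r_le_n assms(2)])
qed

definition scale :: "int vec \<Rightarrow> int vec" where
  "scale u = vec n (\<lambda>j. col_factor j * u $ j)"

lemma scale_carrier [simp]: "scale u \<in> carrier_vec n"
  by (simp add: scale_def)

lemma index_scale [simp]: "j < n \<Longrightarrow> scale u $ j = col_factor j * u $ j"
  by (simp add: scale_def)

lemma ratv_scale:
  "u \<in> carrier_vec n \<Longrightarrow> ratv (scale u) = mat_diag n (\<lambda>j. of_int (col_factor j)) *\<^sub>v ratv u"
  by (auto simp: mat_diag_mult_vec scale_def intro!: eq_vecI)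

lemma lat_rel_scale:
  assumes "(u,v) \<in> lat_rel N"
  shows "(scale u, scale v) \<in> lat_rel N'"
proof -
  obtain w where w: "w \<in> carrier_vec n" and e: "\<forall>j<n. u $ j - v $ j = (\<Sum>i<n. N $$ (i,j) * w $ i)"
    using assms unfolding lat_rel_iff[OF carriers(2)] by blast
  show ?thesis unfolding lat_rel_iff[OF carriers(4)]
  proof (intro conjI scale_carrier bexI[of _ "vec n (\<lambda>i. row_factor i * w $ i)"] allI impI)
    fix j assume j: "j < n"
    have "scale u $ j - scale v $ j = col_factor j * (\<Sum>i<n. N $$ (i,j) * w $ i)"
      using e j by (simp add: right_diff_distrib[symmetric])
    also have "\<dots> = (\<Sum>i<n. N' $$ (i,j) * vec n (\<lambda>i. row_factor i * w $ i) $ i)"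
      unfolding sum_distrib_left
    proof (rule sum.cong)
      fix i assume "i \<in> {..<n}"
      then have "N' $$ (i,j) * (row_factor i * w $ i) = (N' $$ (i,j) * row_factor i) * w $ i"
        by (simp only: mult.assoc)
      also have "\<dots> = col_factor j * (N $$ (i,j) * w $ i)"
        using N'_entry[of i j] j \<open>i \<in> {..<n}\<close> by (simp add: mult_ac)
      finally have "N' $$ (i,j) * (row_factor i * w $ i) = col_factor j * (N $$ (i,j) * w $ i)" .
      then show "col_factor j * (N $$ (i,j) * w $ i)
          = N' $$ (i,j) * vec n (\<lambda>i. row_factor i * w $ i) $ i"
        using \<open>i \<in> {..<n}\<close> by (metis index_vec lessThan_iff)
    qed simp
    finally show "scale u $ j - scale v $ j
        = (\<Sum>i<n. N' $$ (i,j) * vec n (\<lambda>i. row_factor i * w $ i) $ i)" .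
  qed simp
qed

lemma lat_rel_of_scale:
  assumes u: "u \<in> carrier_vec n" and v: "v \<in> carrier_vec n"
    and rel: "(scale u, scale v) \<in> lat_rel N'"
  shows "(u,v) \<in> lat_rel N"
proof -
  obtain y where y: "y \<in> carrier_vec n"
    and e: "\<forall>j<n. scale u $ j - scale v $ j = (\<Sum>i<n. N' $$ (i,j) * y $ i)"
    using rel unfolding lat_rel_iff[OF carriers(4)] by blast
  define x where "x = vec n (\<lambda>i. (if i < n - r then int q else 1) * y $ i)"
  \<comment> \<open>\<open>x = q y X_{0,r}\<close> is integral and \<open>q (u - v) = x N\<close>; the rank condition
    at \<open>q\<close> then shows that \<open>x\<close> is divisible by \<open>q\<close>.\<close>
  have x: "x \<in> carrier_vec n" by (simp add: x_def)
  have key: "int q * (u $ j - v $ j) = (\<Sum>i<n. N $$ (i,j) * x $ i)" if j: "j < n" for j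
  proof -
    have "col_factor j * (int q * (u $ j - v $ j)) = int q * (scale u $ j - scale v $ j)"
      using j by (simp add: algebra_simps)
    also have "\<dots> = (\<Sum>i<n. int q * (N' $$ (i,j) * y $ i))"
      using e j by (simp add: sum_distrib_left)
    also have "\<dots>
        = (\<Sum>i<n. (N' $$ (i,j) * row_factor i) * ((if i < n - r then int q else 1) * y $ i))"
      by (intro sum.cong) (auto simp: row_factor_def mult_ac)
    also have "\<dots> = col_factor j * (\<Sum>i<n. N $$ (i,j) * x $ i)"
      unfolding sum_distrib_left
    proof (rule sum.cong[OF refl])
      fix i assume "i \<in> {..<n}"
      then have i: "i < n" by simp
      show "(N' $$ (i,j) * row_factor i) * ((if i < n - r then int q else 1) * y $ i)
          = col_factor j * (N $$ (i,j) * x $ i)"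
        unfolding N'_entry[OF i j] using i by (simp add: x_def mult_ac)
    qed
    finally show ?thesis using col_factor_nonzero[of j] by simp
  qed
  have x_dvd: "int q dvd x $ i" if "i < n" for i
  proof (rule q_dvd_entries[OF x])
    show "int q dvd x $ i" if "i < n - r" for i using that by (simp add: x_def)
    show "int q dvd (\<Sum>i<n. N $$ (i,j) * x $ i)" if "j < n" for j
      unfolding key[OF that, symmetric] by simp
  qed (rule that)
  show ?thesis unfolding lat_rel_iff[OF carriers(2)]
  proof (intro conjI u v bexI[of _ "vec n (\<lambda>i. x $ i div int q)"] allI impI)
    fix j assume "j < n"
    have "int q * (u $ j - v $ j) = int q * (\<Sum>i<n. N $$ (i,j) * vec n (\<lambda>i. x $ i div int q) $ i)"
      unfolding key[OF \<open>j < n\<close>] sum_distrib_left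
    proof (rule sum.cong[OF refl])
      fix i assume "i \<in> {..<n}"
      then have "i < n" by simp
      then show "N $$ (i,j) * x $ i = int q * (N $$ (i,j) * vec n (\<lambda>i. x $ i div int q) $ i)"
        using x_dvd[of i] by (simp add: dvd_mult_div_cancel mult.left_commute)
    qed
    then show "u $ j - v $ j = (\<Sum>i<n. N $$ (i,j) * vec n (\<lambda>i. x $ i div int q) $ i)"
      using q_pos by simp
  qed simp
qed

lemma scale_surj_mod:
  assumes b: "b \<in> carrier_vec n"
  shows "\<exists>a\<in>carrier_vec n. (scale a, b) \<in> lat_rel N'"
proof -
  have "\<exists>d. \<forall>j<r. (\<Sum>k<r. N $$ (n - r + k, j) * d k) mod int q = (- b $ j) mod int q"
  proof (rule congruence_system_solvable[OF q_pos])
    show "int q dvd d k" if "\<forall>j<r. int q dvd (\<Sum>k<r. N $$ (n - r + k, j) * d k)" "k < r" for d k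
      by (rule lower_block_injective_mod[OF that])
  qed
  then obtain d where d: "\<forall>j<r. (\<Sum>k<r. N $$ (n - r + k, j) * d k) mod int q = (- b $ j) mod int q"
    by blast
  let ?y = "lower_block_vec n r d"
  define s where "s j = (\<Sum>i<n. N' $$ (i,j) * ?y $ i)" for j
  have s_dvd: "int q dvd b $ j + s j" if j: "j < r" for j
  proof -
    have "s j = (\<Sum>k<r. N' $$ (n - r + k, j) * d k)"
      unfolding s_def by (rule sum_lower_block_vec[OF r_le_n])
    also have "\<dots> = (\<Sum>k<r. N $$ (n - r + k, j) * d k)"
      using j r_le_n by (intro sum.cong refl) (simp add: N'_lower_left)
    finally have "s j mod int q = (- b $ j) mod int q" using d j by simp
    then show ?thesis by (simp add: mod_eq_dvd_iff add.commute)
  qed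
  define a where "a = vec n (\<lambda>j. (b $ j + s j) div col_factor j)"
  have "scale a $ j - b $ j = (\<Sum>i<n. N' $$ (i,j) * ?y $ i)" if "j < n" for j
    using that s_dvd by (simp add: a_def col_factor_def s_def)
  then have "(scale a, b) \<in> lat_rel N'"
    unfolding lat_rel_iff[OF carriers(4)] using b
    by (intro conjI scale_carrier bexI[of _ ?y]) (auto simp: lower_block_vec_def)
  then show ?thesis by (auto simp: a_def)
qed

lemma det_N': "det N' \<noteq> 0"
proof -
  have c: "X_0r n q r \<in> carrier_mat n n" "ratm N \<in> carrier_mat n n" "X_r n q r \<in> carrier_mat n n"
    using carriers by (auto simp: X_0r_def X_r_def)
  have "det (ratm N') = det (X_0r n q r * ratm N) * det (X_r n q r)"
    unfolding N'_eq by (rule det_mult) (use c in auto)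
  also have "det (X_0r n q r * ratm N) = det (X_0r n q r) * det (ratm N)"
    by (rule det_mult) (use c in auto)
  finally have "det (ratm N') = det (X_0r n q r) * det (ratm N) * det (X_r n q r)" .
  moreover have "det (X_0r n q r) \<noteq> 0" "det (X_r n q r) \<noteq> 0"
    unfolding X_r_eq X_0r_eq
    by (auto intro!: det_mat_diag_nonzero simp: col_factor_nonzero row_factor_nonzero)
  ultimately have "det (ratm N') \<noteq> 0" using det_N by (simp add: det_ratm)
  then show ?thesis by (simp add: det_ratm)
qed

lemma gauss_term_scale:
  assumes a: "a \<in> carrier_vec n"
  shows "gauss_term M' N' (scale a) = gauss_term M N a"
proof -
  let ?X = "mat_diag n (\<lambda>j. rat_of_int (col_factor j))"
  let ?Xi = "mat_diag n (\<lambda>j. inverse (rat_of_int (col_factor j)))"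
  let ?Xzero = "X_0r n q r"
  have X_ne: "\<And>j. rat_of_int (col_factor j) \<noteq> 0" by (simp add: col_factor_nonzero)
  have cM: "ratm M \<in> carrier_mat n n" "ratm N \<in> carrier_mat n n"
    and cXzero: "?Xzero \<in> carrier_mat n n"
    using carriers by (auto simp: X_0r_def)
  obtain z where z: "z \<in> carrier_vec n" and Nz: "ratm N *\<^sub>v z = ratm M *\<^sub>v ratv a"
    using ratm_solvable[OF carriers(2) det_N] cM a by (metis map_carrier_vec mult_mat_vec_carrier)
  have "ratm N' *\<^sub>v (?Xi *\<^sub>v z) = ?Xzero *\<^sub>v (ratm N *\<^sub>v (?X *\<^sub>v (?Xi *\<^sub>v z)))"
    unfolding N'_eq X_r_eq
    by (rule mult_mat_vec_assoc3) (use cM cXzero z in auto)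
  also have "?X *\<^sub>v (?Xi *\<^sub>v z) = z" by (rule mat_diag_inverse_mult_vec(2)[OF X_ne z])
  also have "ratm N *\<^sub>v z = ratm M *\<^sub>v (?Xi *\<^sub>v (?X *\<^sub>v ratv a))"
    unfolding Nz using mat_diag_inverse_mult_vec(1)[OF X_ne, of "ratv a"] a by simp
  also have "?Xzero *\<^sub>v (ratm M *\<^sub>v (?Xi *\<^sub>v (?X *\<^sub>v ratv a))) = ratm M' *\<^sub>v ratv (scale a)"
    unfolding M'_eq mat_inv_X_r ratv_scale[OF a]
    by (rule mult_mat_vec_assoc3[symmetric]) (use cM cXzero a in auto)
  finally have "gauss_term M' N' (scale a) = e_rat (ratv (scale a) \<bullet> (?Xi *\<^sub>v z))"
    using z carriers by (intro gauss_term_eq_e_rat[OF _ _ det_N']) auto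
  also have "ratv (scale a) \<bullet> (?Xi *\<^sub>v z) = ratv a \<bullet> z"
    unfolding ratv_scale[OF a] using a z by (intro scalar_prod_mat_diag_inverse X_ne) auto
  finally show ?thesis using gauss_term_eq_e_rat[OF carriers(1,2) det_N a z Nz] by simp
qed

end

theorem proposition5p2:
  fixes n r q :: nat and M N M' N' :: "int mat"
  assumes "prime q" and "r \<le> n"
    and "coprime_sym_pair n M N" and "det N \<noteq> 0"
    and "ratm M' = X_0r n q r * ratm M * mat_inv (X_r n q r)"
    and "ratm N' = X_0r n q r * ratm N * X_r n q r"
    and "coprime_sym_pair n M' N'"
  shows "gauss_sum M' N' = gauss_sum M N"
proof -
  interpret q_scaling n r q M N M' N'
    using assms by unfold_locales
  have sym: "transpose_mat (M * transpose_mat N) = M * transpose_mat N"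
    and sym': "transpose_mat (M' * transpose_mat N') = M' * transpose_mat N'"
    using assms(3,7) by (simp_all add: coprime_sym_pair_def)
  have "(\<Sum>D\<in>carrier_vec n // lat_rel N'. gauss_term M' N' (SOME b. b \<in> D))
      = (\<Sum>C\<in>carrier_vec n // lat_rel N. gauss_term M N (SOME a. a \<in> C))"
  proof (rule sum_quotient_reindex[where g = scale])
    show "equiv (carrier_vec n) (lat_rel N)" "equiv (carrier_vec n) (lat_rel N')"
      using lat_rel_equiv carriers by blast+
    show "(scale a, scale a') \<in> lat_rel N' \<longleftrightarrow> (a, a') \<in> lat_rel N"
      if "a \<in> carrier_vec n" "a' \<in> carrier_vec n" for a a'
      using lat_rel_scale lat_rel_of_scale that by blast
    show "gauss_term M N a = gauss_term M N a'" if "(a, a') \<in> lat_rel N" for a a'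
      using gauss_term_lat_rel[OF carriers(1,2) det_N sym that] .
    show "gauss_term M' N' b = gauss_term M' N' b'" if "(b, b') \<in> lat_rel N'" for b b'
      using gauss_term_lat_rel[OF carriers(3,4) det_N' sym' that] .
  qed (simp_all add: scale_surj_mod gauss_term_scale)
  then show ?thesis using carriers by (simp add: gauss_sum_def)
qed

end
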